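(* Fix a total number $N_{\text{total}} > 0$ of collected data samples, split into $N_{\text{total}}/E_L$ episodes each of fixed length $E_L \in \{1,2,\dots\}$. Let $P_s(l)$ be the probability that the state at interaction step $l$ of an episode is secure (independent of $E_L$), let $N_s(E_L) = \frac{N_{\text{total}}}{E_L}\sum_{l=1}^{E_L} P_s(l)$ be the expected number of secure state visits over all episodes, $N_d(E_L) = N_{\text{total}} - N_s(E_L)$ the expected number of dead-end state visits, and $P_d(E_L) = N_d(E_L)/N_{\text{total}}$ the probability of visiting dead-end states. Then reducing $E_L$ causes $P_d$ to decrease or remain unchanged: $P_d(E_L) \le P_d(E_L+1)$ for every $E_L \ge 1$.
   Context: A dead-end state is a state from which, once reached at some step of a trajectory, no policy can lead to the goal state at any later step; a secure state is a state that is not a dead-end state. The dead-end set is absorbing along trajectories, so that $P_s(l) = \prod_{k=1}^{l}(1-P_d(k))$ with per-step dead-end probabilities $P_d(k)\in[0,1]$; in particular $P_s$ is non-increasing in $l$. *)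

theory Defs
  imports Complex_Main
begin

text \<open>Per-step dead-end probabilities pd k (k = 1,2,...); probability of being secure at step l.\<close>
definition secure_prob :: "(nat \<Rightarrow> real) \<Rightarrow> nat \<Rightarrow> real" where
  "secure_prob pd l = (\<Prod>k = 1..l. 1 - pd k)"

definition N_s :: "real \<Rightarrow> (nat \<Rightarrow> real) \<Rightarrow> nat \<Rightarrow> real" where
  "N_s Ntot Ps EL = Ntot / real EL * (\<Sum>l = 1..EL. Ps l)"

definition N_d :: "real \<Rightarrow> (nat \<Rightarrow> real) \<Rightarrow> nat \<Rightarrow> real" where
  "N_d Ntot Ps EL = Ntot - N_s Ntot Ps EL"

definition P_visit_dead :: "real \<Rightarrow> (nat \<Rightarrow> real) \<Rightarrow> nat \<Rightarrow> real" where
  "P_visit_dead Ntot Ps EL = N_d Ntot Ps EL / Ntot"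

end

theory Submission
  imports Defs
begin

(* P_d(E_L) is one minus the average of P_s over the first E_L steps, the factor N_total
   cancelling. Since P_s is a product of factors in [0,1] it is non-increasing, and appending
   to a list a value that is no larger than any of its entries cannot raise its average. *)

lemma secure_prob_Suc: "secure_prob pd (Suc m) = secure_prob pd m * (1 - pd (Suc m))"
  unfolding secure_prob_def by (simp add: prod.nat_ivl_Suc' mult.commute)

lemma secure_prob_decseq:
  assumes "\<And>k. k \<ge> 1 \<Longrightarrow> 0 \<le> pd k \<and> pd k \<le> 1"
  shows "decseq (secure_prob pd)"
proof (rule decseq_SucI)
  fix m
  have "0 \<le> secure_prob pd m"
    unfolding secure_prob_def using assms by (intro prod_nonneg) auto
  moreover have "0 \<le> pd (Suc m)" using assms[of "Suc m"] by simp
  ultimately show "secure_prob pd (Suc m) \<le> secure_prob pd m"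
    unfolding secure_prob_Suc by (simp add: mult_left_le)
qed

lemma average_Suc_le_average_of_decseq:
  fixes f :: "nat \<Rightarrow> real"
  assumes "decseq f" and "n \<ge> 1"
  shows "(\<Sum>l = 1..n + 1. f l) / real (n + 1) \<le> (\<Sum>l = 1..n. f l) / real n"
proof -
  define S where "S = (\<Sum>l = 1..n. f l)"
  have "(\<Sum>l = 1..n. f (n + 1)) \<le> S"
    unfolding S_def by (intro sum_mono decseqD[OF assms(1)]) auto
  then have "real n * f (n + 1) \<le> S" by simp
  moreover have "(\<Sum>l = 1..n + 1. f l) = S + f (n + 1)"
    unfolding S_def by simp
  ultimately show ?thesis
    using assms(2) by (simp add: S_def[symmetric] field_simps)
qed

lemma P_visit_dead_eq_one_minus_average:
  assumes "Ntot \<noteq> 0"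
  shows "P_visit_dead Ntot Ps EL = 1 - (\<Sum>l = 1..EL. Ps l) / real EL"
  unfolding P_visit_dead_def N_d_def N_s_def using assms by (simp add: field_simps)

theorem corollary1:
  fixes Ntot :: real and pd :: "nat \<Rightarrow> real" and EL :: nat
  assumes "Ntot > 0"
    and "\<And>k. k \<ge> 1 \<Longrightarrow> 0 \<le> pd k \<and> pd k \<le> 1"
    and "EL \<ge> 1"
  shows "P_visit_dead Ntot (secure_prob pd) EL \<le> P_visit_dead Ntot (secure_prob pd) (EL + 1)"
proof -
  have "decseq (secure_prob pd)"
    using assms(2) by (rule secure_prob_decseq)
  then have "(\<Sum>l = 1..EL + 1. secure_prob pd l) / real (EL + 1)
      \<le> (\<Sum>l = 1..EL. secure_prob pd l) / real EL"
    using assms(3) by (rule average_Suc_le_average_of_decseq)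
  then show ?thesis
    using assms(1) by (simp only: P_visit_dead_eq_one_minus_average)
qed

end
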